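(* Let $\{X_n\}_{n=-\infty}^{\infty}$ be a stationary time series taking values in a finite alphabet $\mathcal{X}$. For $k\ge1$, $n\ge0$ and $j\ge0$, define the time series $\{\tilde X^{(k,n,j)}_i\}_{i=-\infty}^{\infty}$ by $\tilde X^{(k,n,j)}_i=X_{n-\tau^k_j(n)+i}$ for $-\infty<i<\infty$. Then $\{\tilde X^{(k,n,j)}_i\}_{i=-\infty}^{\infty}$ has the same distribution as $\{X_i\}_{i=-\infty}^{\infty}$.
   Context: Notation: $X_m^n=(X_m,\dots,X_n)$. For $k\ge1$ and $n\ge0$, $\tau^k_0(n)=0$ and for $i\ge1$, $\tau^k_i(n)=\min\{t>\tau^k_{i-1}(n): X_{n-k+1-t}^{n-t}=X_{n-k+1}^n\}$, i.e. the successive times $t>0$ going backward at which the block $X_{n-k+1}^n$ reoccurs ending at position $n-t$. *)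

theory Defs
  imports "HOL-Probability.Probability"
begin

definition seq_space :: "(int \<Rightarrow> 'a) measure" where
  "seq_space = PiM UNIV (\<lambda>_. count_space UNIV)"

definition stationary :: "'b measure \<Rightarrow> (int \<Rightarrow> 'b \<Rightarrow> 'a) \<Rightarrow> bool" where
  "stationary M X \<longleftrightarrow>
     (\<forall>m::int. distr M seq_space (\<lambda>\<omega> i. X (i + m) \<omega>) = distr M seq_space (\<lambda>\<omega> i. X i \<omega>))"

text \<open>The block X_{n-k+1}^n reoccurs ending at position n - t:
  X_{n-k+1-t}^{n-t} = X_{n-k+1}^n.\<close>
definition reoccurs :: "(int \<Rightarrow> 'b \<Rightarrow> 'a) \<Rightarrow> nat \<Rightarrow> int \<Rightarrow> nat \<Rightarrow> 'b \<Rightarrow> bool" where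
  "reoccurs X k n t \<omega> \<longleftrightarrow> (\<forall>l<k. X (n - int t - int l) \<omega> = X (n - int l) \<omega>)"

text \<open>Recurrence times tau^k_j(n). Convention: if no further reoccurrence exists
  (a null event for stationary finite-alphabet processes), the value is 0.\<close>
fun tau :: "(int \<Rightarrow> 'b \<Rightarrow> 'a) \<Rightarrow> nat \<Rightarrow> int \<Rightarrow> nat \<Rightarrow> 'b \<Rightarrow> nat" where
  "tau X k n 0 \<omega> = 0"
| "tau X k n (Suc j) \<omega> =
     (if \<exists>t. t > tau X k n j \<omega> \<and> reoccurs X k n t \<omega>
      then (LEAST t. t > tau X k n j \<omega> \<and> reoccurs X k n t \<omega>)
      else 0)"

end

theory Submission
  imports Defs
begin

text \<open>
  Work with the law \<open>P\<close> of the path, a shift-invariant probability measure on sequence space.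
  By Poincar\'e recurrence every block almost surely reoccurs infinitely often, both backward and
  forward in time, so \<open>\<tau>\<^sub>j(n) = t\<close> (for \<open>j \<ge> 1\<close>) means that \<open>t\<close> is a
  reoccurrence time preceded by exactly \<open>j - 1\<close> others. Shifting the path by \<open>n - t\<close>
  turns the \<open>j\<close>-th backward reoccurrence at distance \<open>t\<close> into the \<open>j\<close>-th forward
  reoccurrence at distance \<open>t\<close> of the block ending at 0. Summing over \<open>t\<close> and using
  shift invariance, the law of the path seen from \<open>n - \<tau>\<^sub>j(n)\<close> is the sum over \<open>t\<close> of
  the law of the path restricted to "the \<open>j\<close>-th forward reoccurrence happens at \<open>t\<close>",
  and these events partition the sequence space up to a null set.
\<close>

definition count_below :: "(nat \<Rightarrow> bool) \<Rightarrow> nat \<Rightarrow> nat" where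
  "count_below Q t = card {s \<in> {1..<t}. Q s}"

lemma count_below_Suc:
  "count_below Q (Suc t) = count_below Q t + (if 1 \<le> t \<and> Q t then 1 else 0)"
proof (cases "1 \<le> t \<and> Q t")
  case True
  then have "{s \<in> {1..<Suc t}. Q s} = insert t {s \<in> {1..<t}. Q s}" by auto
  then show ?thesis using True unfolding count_below_def by simp
next
  case False
  then have "{s \<in> {1..<Suc t}. Q s} = {s \<in> {1..<t}. Q s}" by (auto simp: less_Suc_eq)
  then show ?thesis using False unfolding count_below_def by simp
qed

lemma measurable_count_below:
  assumes "\<And>s. Measurable.pred M (\<lambda>x. Q x s)"
  shows "(\<lambda>x. count_below (Q x) t) \<in> M \<rightarrow>\<^sub>M count_space UNIV"
proof (induct t)
  case 0
  then show ?case by (simp add: count_below_def)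
next
  case (Suc t)
  note [measurable] = Suc assms
  show ?case unfolding count_below_Suc by measurable
qed

lemma count_below_less:
  assumes "0 < a" "Q a" "a < b"
  shows "count_below Q a < count_below Q b"
proof -
  have "insert a {s \<in> {1..<a}. Q s} \<subseteq> {s \<in> {1..<b}. Q s}" using assms by auto
  then have "card (insert a {s \<in> {1..<a}. Q s}) \<le> count_below Q b"
    unfolding count_below_def by (intro card_mono) auto
  then show ?thesis unfolding count_below_def by simp
qed

lemma count_below_inj:
  assumes "0 < t" "Q t" "0 < t'" "Q t'" "count_below Q t = count_below Q t'"
  shows "t = t'"
  using count_below_less[of t Q t'] count_below_less[of t' Q t] assms
  by (cases t t' rule: linorder_cases) auto

lemma count_below_Least:
  assumes "a < b" "Q b"
  shows "count_below Q (LEAST t. a < t \<and> Q t) = count_below Q (Suc a)"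
proof -
  define t' where "t' = (LEAST t. a < t \<and> Q t)"
  have t': "a < t'" "Q t'"
    using LeastI[of "\<lambda>t. a < t \<and> Q t" b] assms unfolding t'_def by auto
  have "\<not> Q s" if "a < s" "s < t'" for s
    using not_less_Least[of s "\<lambda>t. a < t \<and> Q t"] that unfolding t'_def by auto
  then have "{s \<in> {1..<t'}. Q s} = {s \<in> {1..<Suc a}. Q s}"
    using t' by (auto simp: less_Suc_eq_le) (meson not_le)
  then show ?thesis unfolding count_below_def t'_def by simp
qed

lemma count_below_attains:
  assumes "\<forall>N. \<exists>t>N. Q t"
  shows "\<exists>t>0. Q t \<and> count_below Q t = c"
proof -
  have next_point: "\<exists>t>a. Q t \<and> count_below Q t = count_below Q (Suc a)" for a
  proof -
    obtain b where "a < b" "Q b" using assms by blast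
    then show ?thesis
      using LeastI[of "\<lambda>t. a < t \<and> Q t" b] count_below_Least[of a b Q]
      by (intro exI[of _ "LEAST t. a < t \<and> Q t"]) auto
  qed
  show ?thesis
  proof (induct c)
    case 0
    show ?case using next_point[of 0] by (simp add: count_below_def)
  next
    case (Suc c)
    then obtain a where a: "0 < a" "Q a" "count_below Q a = c" by blast
    obtain t where "a < t" "Q t" "count_below Q t = count_below Q (Suc a)"
      using next_point by blast
    then show ?case using a by (intro exI[of _ t]) (simp add: count_below_Suc)
  qed
qed

lemma count_below_reflect:
  assumes "\<And>s. 0 < s \<Longrightarrow> s < t \<Longrightarrow> Q s \<longleftrightarrow> R (t - s)"
  shows "count_below Q t = count_below R t"
proof -
  have "{s \<in> {1..<t}. Q s} = (\<lambda>u. t - u) ` {u \<in> {1..<t}. R u}"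
  proof
    show "{s \<in> {1..<t}. Q s} \<subseteq> (\<lambda>u. t - u) ` {u \<in> {1..<t}. R u}"
      using assms by (auto intro!: image_eqI[where x = "t - _"])
    show "(\<lambda>u. t - u) ` {u \<in> {1..<t}. R u} \<subseteq> {s \<in> {1..<t}. Q s}"
      using assms by auto
  qed
  moreover have "inj_on (\<lambda>u. t - u) {u \<in> {1..<t}. R u}" by (rule inj_onI) auto
  ultimately show ?thesis unfolding count_below_def by (simp add: card_image)
qed

declare tau.simps(2) [simp del]

lemma tau_Suc_eq_iff:
  assumes io: "\<forall>N. \<exists>t>N. reoccurs X k n t \<omega>"
  shows "tau X k n (Suc j) \<omega> = t \<longleftrightarrow>
    0 < t \<and> reoccurs X k n t \<omega> \<and> count_below (\<lambda>s. reoccurs X k n s \<omega>) t = j"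
proof -
  let ?R = "\<lambda>s. reoccurs X k n s \<omega>" and ?\<tau> = "\<lambda>j. tau X k n j \<omega>"
  have step: "?\<tau> j < ?\<tau> (Suc j) \<and> ?R (?\<tau> (Suc j))
      \<and> count_below ?R (?\<tau> (Suc j)) = count_below ?R (Suc (?\<tau> j))" for j
  proof -
    obtain b where b: "?\<tau> j < b" "?R b" using io by blast
    then have "?\<tau> (Suc j) = (LEAST t. ?\<tau> j < t \<and> ?R t)"
      unfolding tau.simps(2) by auto
    then show ?thesis
      using LeastI[of "\<lambda>t. ?\<tau> j < t \<and> ?R t" b] count_below_Least[of _ b ?R, OF b] b by simp
  qed
  have inv: "0 < ?\<tau> (Suc j) \<and> ?R (?\<tau> (Suc j)) \<and> count_below ?R (?\<tau> (Suc j)) = j" for j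
  proof (induct j)
    case 0
    have "count_below ?R (Suc 0) = 0" by (simp add: count_below_def)
    with step[of 0] show ?case by simp
  next
    case (Suc j)
    with step[of "Suc j"] show ?case by (simp add: count_below_Suc)
  qed
  show ?thesis using inv[of j] count_below_inj[of "?\<tau> (Suc j)" ?R t] by auto
qed

lemma tau_coordinates: "tau X k c j \<omega> = tau (\<lambda>i x. x i) k c j (\<lambda>i. X i \<omega>)"
  by (induct j) (auto simp: tau.simps reoccurs_def)

lemma space_seq_space [simp]: "space seq_space = UNIV"
  by (simp add: seq_space_def space_PiM)

lemma measurable_tau_coordinates [measurable]:
  "(\<lambda>x::int \<Rightarrow> 'a::countable. tau (\<lambda>i x. x i) k n j x) \<in> seq_space \<rightarrow>\<^sub>M count_space UNIV"
proof (induct j)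
  case 0
  then show ?case by simp
next
  case (Suc j)
  note [measurable] = Suc[unfolded seq_space_def]
  show ?case unfolding tau.simps reoccurs_def seq_space_def by measurable
qed

lemma measurable_shift_seq_space [measurable]:
  "(\<lambda>x::int \<Rightarrow> 'a::countable. \<lambda>i. x (i + m)) \<in> seq_space \<rightarrow>\<^sub>M seq_space"
  unfolding seq_space_def by (rule measurable_PiM_single') auto

lemma measurable_random_shift:
  fixes \<tau> :: "(int \<Rightarrow> 'a::countable) \<Rightarrow> nat"
  assumes "\<tau> \<in> seq_space \<rightarrow>\<^sub>M count_space UNIV"
  shows "(\<lambda>x i. x (c - int (\<tau> x) + i)) \<in> seq_space \<rightarrow>\<^sub>M seq_space"
proof -
  have "(\<lambda>x. x (c - int (\<tau> x) + i)) \<in> seq_space \<rightarrow>\<^sub>M count_space UNIV" for i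
  proof (rule measurable_compose_countable[where f = "\<lambda>t x. x (c - int t + i)"])
    show "(\<lambda>x. x (c - int t + i)) \<in> seq_space \<rightarrow>\<^sub>M count_space UNIV" for t
      unfolding seq_space_def by measurable
  qed (rule assms)
  then show ?thesis unfolding seq_space_def by (intro measurable_PiM_single') auto
qed

definition forward_return :: "nat \<Rightarrow> (int \<Rightarrow> 'a) \<Rightarrow> nat \<Rightarrow> bool" where
  "forward_return k y u \<longleftrightarrow> (\<forall>l<k. y (int u - int l) = y (- int l))"

lemma measurable_forward_return [measurable]:
  "Measurable.pred seq_space (\<lambda>y::int \<Rightarrow> 'a::countable. forward_return k y u)"
  unfolding forward_return_def seq_space_def by measurable

lemma reoccurs_shift_iff_forward_return:
  "reoccurs (\<lambda>i x. x i) k c t (\<lambda>i. y (i + (int t - c))) \<longleftrightarrow> forward_return k y t"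
  unfolding reoccurs_def forward_return_def by (auto simp: algebra_simps)

lemma reoccurs_shift_before_forward_return:
  assumes "forward_return k y t" "s \<le> t"
  shows "reoccurs (\<lambda>i x. x i) k c s (\<lambda>i. y (i + (int t - c))) \<longleftrightarrow> forward_return k y (t - s)"
  using assms unfolding reoccurs_def forward_return_def by (auto simp: algebra_simps)

lemma backward_count_eq_forward_count:
  "(0 < t \<and> reoccurs (\<lambda>i x. x i) k c t x' \<and> count_below (\<lambda>s. reoccurs (\<lambda>i x. x i) k c s x') t = J)
     \<longleftrightarrow> (0 < t \<and> forward_return k y t \<and> count_below (forward_return k y) t = J)"
  if "x' = (\<lambda>i. y (i + (int t - c)))"
proof (cases "forward_return k y t")
  case True
  then have "count_below (\<lambda>s. reoccurs (\<lambda>i x. x i) k c s x') t = count_below (forward_return k y) t"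
    using that reoccurs_shift_before_forward_return[OF True] by (intro count_below_reflect) simp
  then show ?thesis using True that reoccurs_shift_iff_forward_return[of k c t y] by simp
next
  case False
  then show ?thesis using that reoccurs_shift_iff_forward_return[of k c t y] by simp
qed

locale stationary_law = prob_space P
  for P :: "(int \<Rightarrow> 'a::countable) measure" +
  assumes sets_P: "sets P = sets seq_space"
    and shift_invariant: "\<And>m. distr P seq_space (\<lambda>x i. x (i + m)) = P"
begin

lemma space_P [simp]: "space P = UNIV"
  using sets_eq_imp_space_eq[OF sets_P] by simp

lemma measurable_P [simp]: "measurable P N = measurable seq_space N"
  by (rule measurable_cong_sets[OF sets_P refl])

lemma shift_vimage_sets:
  assumes "A \<in> sets seq_space"
  shows "(\<lambda>x i. x (i + m)) -` A \<in> sets P"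
  using measurable_sets[OF measurable_shift_seq_space assms, of m] by (simp add: sets_P)

lemma emeasure_shift_vimage:
  assumes "A \<in> sets seq_space"
  shows "emeasure P ((\<lambda>x i. x (i + m)) -` A) = emeasure P A"
proof -
  have "emeasure P A = emeasure (distr P seq_space (\<lambda>x i. x (i + m))) A"
    using shift_invariant by simp
  also have "\<dots> = emeasure P ((\<lambda>x i. x (i + m)) -` A)"
    using emeasure_distr[of "\<lambda>x i. x (i + m)" P seq_space A] assms by simp
  finally show ?thesis ..
qed

lemma never_returns_null:
  "{x :: int \<Rightarrow> 'a. \<forall>t::nat\<ge>1. \<not> (\<forall>l<k. x (d * int t - int l) = x (- int l))} \<in> null_sets P"
proof -
  define N where "N = {x :: int \<Rightarrow> 'a. \<forall>t::nat\<ge>1. \<not> (\<forall>l<k. x (d * int t - int l) = x (- int l))}"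
  define C where "C w = N \<inter> {x. \<forall>l<k. x (- int l) = w ! l}" for w :: "'a list"
  have C_sets: "C w \<in> sets seq_space" for w
  proof -
    have "C w = {x \<in> space seq_space. (\<forall>t::nat\<ge>1. \<not> (\<forall>l<k. x (d * int t - int l) = x (- int l)))
        \<and> (\<forall>l<k. x (- int l) = w ! l)}"
      by (auto simp: C_def N_def)
    also have "\<dots> \<in> sets seq_space" unfolding seq_space_def by measurable
    finally show ?thesis .
  qed
  have C_null: "C w \<in> null_sets P" for w
  proof -
    define D where "D m = (\<lambda>x i. x (i + d * int m)) -` C w" for m :: nat
    txt \<open>The translates \<open>D m\<close> all have measure \<open>P (C w)\<close> and are pairwise disjoint (a path in
      \<open>D m \<inter> D m'\<close> would return after \<open>m' - m\<close> steps), so finiteness of \<open>P\<close> forces \<open>P (C w) = 0\<close>.\<close>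
    have D_disjoint: "D m \<inter> D m' = {}" if "m < m'" for m m'
    proof (rule equals0I)
      fix x assume x: "x \<in> D m \<inter> D m'"
      define y where "y = (\<lambda>i. x (i + d * int m))"
      have "y \<in> N" and w: "\<forall>l<k. y (- int l) = w ! l" "\<forall>l<k. x (- int l + d * int m') = w ! l"
        using x unfolding D_def C_def y_def by auto
      have "y (d * int (m' - m) - int l) = x (- int l + d * int m')" for l
        using that unfolding y_def by (simp add: of_nat_diff algebra_simps)
      then have "\<forall>l<k. y (d * int (m' - m) - int l) = y (- int l)"
        using w by simp
      moreover have "1 \<le> m' - m" using that by simp
      ultimately show False
        using \<open>y \<in> N\<close> unfolding N_def by blast
    qed
    have "disjoint_family D"
      unfolding disjoint_family_on_def
      using D_disjoint by (metis Int_commute linorder_neqE_nat)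
    then have "(\<lambda>m. measure P (D m)) sums measure P (\<Union>m. D m)"
      using shift_vimage_sets[OF C_sets] unfolding D_def
      by (intro finite_measure_UNION) auto
    moreover have "measure P (D m) = measure P (C w)" for m
      unfolding D_def measure_def using emeasure_shift_vimage[OF C_sets] by simp
    ultimately have "(\<lambda>m::nat. measure P (C w)) \<longlonglongrightarrow> 0"
      by (intro summable_LIMSEQ_zero) (simp add: sums_iff)
    then have "measure P (C w) = 0" by (simp add: LIMSEQ_const_iff)
    then show ?thesis using C_sets sets_P by (simp add: emeasure_eq_measure null_setsI)
  qed
  have "N = (\<Union>w. C w)"
  proof
    show "N \<subseteq> (\<Union>w. C w)"
    proof
      fix x assume "x \<in> N"
      then have "x \<in> C (map (\<lambda>l. x (- int l)) [0..<k])" unfolding C_def by simp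
      then show "x \<in> (\<Union>w. C w)" by blast
    qed
  qed (auto simp: C_def)
  also have "\<dots> \<in> null_sets P"
    using C_null by (intro null_sets_UN') auto
  finally show ?thesis unfolding N_def .
qed

text \<open>Poincar\'e recurrence for blocks: from a path whose block never returns after time
  \<open>t\<^sub>0\<close> (the last return), the path shifted to \<open>t\<^sub>0\<close> never returns at all.\<close>
lemma AE_infinitely_many_returns:
  "AE x in P. \<forall>N. \<exists>t>N. \<forall>l<k. x (p + d * int t - int l) = x (p - int l)"
proof (rule AE_I')
  define N0 where "N0 = {x :: int \<Rightarrow> 'a. \<forall>t::nat\<ge>1. \<not> (\<forall>l<k. x (d * int t - int l) = x (- int l))}"
  have N0_null: "N0 \<in> null_sets P" unfolding N0_def by (rule never_returns_null)
  then have N0_sets: "N0 \<in> sets seq_space" using sets_P by (auto simp: null_sets_def)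
  show "(\<Union>q::int. (\<lambda>x i. x (i + q)) -` N0) \<in> null_sets P"
  proof (rule null_sets_UN)
    fix q :: int
    show "(\<lambda>x i. x (i + q)) -` N0 \<in> null_sets P"
      using N0_null shift_vimage_sets[OF N0_sets, of q] emeasure_shift_vimage[OF N0_sets, of q]
      by (simp add: null_sets_def)
  qed
  show "{x \<in> space P. \<not> (\<forall>N. \<exists>t>N. \<forall>l<k. x (p + d * int t - int l) = x (p - int l))}
      \<subseteq> (\<Union>q::int. (\<lambda>x i. x (i + q)) -` N0)"
  proof
    fix x assume "x \<in> {x \<in> space P. \<not> (\<forall>N. \<exists>t>N. \<forall>l<k. x (p + d * int t - int l) = x (p - int l))}"
    then obtain N where N: "\<And>t. t > N \<Longrightarrow> \<not> (\<forall>l<k. x (p + d * int t - int l) = x (p - int l))"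
      by auto
    define B where "B t \<longleftrightarrow> (\<forall>l<k. x (p + d * int t - int l) = x (p - int l))" for t
    define t0 where "t0 = Max {t. t \<le> N \<and> B t}"
    have fin: "finite {t. t \<le> N \<and> B t}" by simp
    have "B 0" unfolding B_def by simp
    then have "t0 \<in> {t. t \<le> N \<and> B t}" unfolding t0_def using fin by (intro Max_in) auto
    then have t0: "B t0" by simp
    have t0_max: "t \<le> t0" if "t \<le> N" "B t" for t unfolding t0_def using fin that by simp
    have "(\<lambda>i. x (i + (p + d * int t0))) \<in> N0"
      unfolding N0_def
    proof (intro CollectI allI impI notI)
      fix t :: nat assume t: "1 \<le> t"
        and return: "\<forall>l<k. x (d * int t - int l + (p + d * int t0)) = x (- int l + (p + d * int t0))"
      have "B (t0 + t)"
        unfolding B_def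
      proof (intro allI impI)
        fix l assume "l < k"
        have "x (p + d * int (t0 + t) - int l) = x (d * int t - int l + (p + d * int t0))"
          by (simp add: algebra_simps)
        also have "\<dots> = x (- int l + (p + d * int t0))"
          using return \<open>l < k\<close> by blast
        also have "\<dots> = x (p + d * int t0 - int l)"
          by (simp add: algebra_simps)
        also have "\<dots> = x (p - int l)" using t0 \<open>l < k\<close> unfolding B_def by simp
        finally show "x (p + d * int (t0 + t) - int l) = x (p - int l)" .
      qed
      show False
      proof (cases "N < t0 + t")
        case True
        then show False using N \<open>B (t0 + t)\<close> unfolding B_def by blast
      next
        case False
        then show False using t0_max[of "t0 + t"] \<open>B (t0 + t)\<close> t by simp
      qed
    qed
    then show "x \<in> (\<Union>q::int. (\<lambda>x i. x (i + q)) -` N0)" by blast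
  qed
qed

text \<open>\<open>F t\<close> is the event, seen from the new origin, that the shift was \<open>t\<close>: shift invariance
  moves each piece \<open>{\<tau> = t}\<close> onto \<open>F t\<close>, and the pieces \<open>F t\<close> reassemble \<open>P\<close>.\<close>
lemma distr_random_shift:
  fixes \<tau> :: "(int \<Rightarrow> 'a) \<Rightarrow> nat" and F :: "nat \<Rightarrow> (int \<Rightarrow> 'a) set"
  assumes \<tau>: "\<tau> \<in> seq_space \<rightarrow>\<^sub>M count_space UNIV"
    and F_sets: "\<And>t. F t \<in> sets seq_space"
    and F_disjoint: "disjoint_family F"
    and F_cover: "AE y in P. y \<in> (\<Union>t. F t)"
    and \<tau>_F: "\<And>t. AE x in P. \<tau> x = t \<longleftrightarrow> (\<lambda>i. x (i + (c - int t))) \<in> F t"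
  shows "distr P seq_space (\<lambda>x i. x (c - int (\<tau> x) + i)) = P"
proof (rule measure_eqI)
  show "sets (distr P seq_space (\<lambda>x i. x (c - int (\<tau> x) + i))) = sets P"
    by (simp add: sets_P)
next
  fix A assume "A \<in> sets (distr P seq_space (\<lambda>x i. x (c - int (\<tau> x) + i)))"
  then have A: "A \<in> sets seq_space" by simp
  define E where "E t = \<tau> -` {t} \<inter> (\<lambda>x i. x (i + (c - int t))) -` A" for t
  have "\<tau> -` {t} \<in> sets P" for t
    using measurable_sets[OF \<tau>, of "{t}"] by (simp add: sets_P)
  then have E_sets: "E t \<in> sets P" for t
    unfolding E_def using shift_vimage_sets[OF A] by auto
  have "(\<lambda>x i. x (c - int (\<tau> x) + i)) -` A = (\<Union>t. E t)"
    unfolding E_def by (auto simp: add.commute)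
  then have "emeasure (distr P seq_space (\<lambda>x i. x (c - int (\<tau> x) + i))) A = emeasure P (\<Union>t. E t)"
    using emeasure_distr[of "\<lambda>x i. x (c - int (\<tau> x) + i)" P seq_space A]
      measurable_random_shift[OF \<tau>] A by simp
  also have "\<dots> = (\<Sum>t. emeasure P (E t))"
  proof (rule suminf_emeasure[symmetric])
    show "range E \<subseteq> sets P" using E_sets by auto
    show "disjoint_family E" unfolding disjoint_family_on_def E_def by auto
  qed
  also have "\<dots> = (\<Sum>t. emeasure P ((\<lambda>x i. x (i + (c - int t))) -` (F t \<inter> A)))"
  proof (intro suminf_cong emeasure_eq_AE)
    show "AE x in P. x \<in> E t \<longleftrightarrow> x \<in> (\<lambda>x i. x (i + (c - int t))) -` (F t \<inter> A)" for t
      using \<tau>_F[of t] by eventually_elim (auto simp: E_def)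
    show "(\<lambda>x i. x (i + (c - int t))) -` (F t \<inter> A) \<in> sets P" for t
      using F_sets A by (intro shift_vimage_sets sets.Int)
  qed (rule E_sets)
  also have "\<dots> = (\<Sum>t. emeasure P (F t \<inter> A))"
    using F_sets A by (intro suminf_cong emeasure_shift_vimage sets.Int)
  also have "\<dots> = emeasure P (\<Union>t. F t \<inter> A)"
  proof (rule suminf_emeasure)
    show "range (\<lambda>t. F t \<inter> A) \<subseteq> sets P"
      using F_sets A by (auto simp: sets_P)
    show "disjoint_family (\<lambda>t. F t \<inter> A)"
      using F_disjoint by (rule disjoint_family_on_bisimulation) auto
  qed
  also have "\<dots> = emeasure P A"
  proof (rule emeasure_eq_AE)
    show "AE x in P. x \<in> (\<Union>t. F t \<inter> A) \<longleftrightarrow> x \<in> A"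
      using F_cover by eventually_elim auto
  qed (use F_sets A in \<open>auto simp: sets_P\<close>)
  finally show "emeasure (distr P seq_space (\<lambda>x i. x (c - int (\<tau> x) + i))) A = emeasure P A" .
qed

lemma distr_shift_by_tau:
  "distr P seq_space (\<lambda>x i. x (c - int (tau (\<lambda>i x. x i) k c j x) + i)) = P"
proof (cases j)
  case 0
  then have "(\<lambda>(x :: int \<Rightarrow> 'a) i. x (c - int (tau (\<lambda>i x. x i) k c j x) + i)) = (\<lambda>x i. x (i + c))"
    by (simp add: add.commute)
  then show ?thesis using shift_invariant[of c] by simp
next
  case (Suc J)
  define F where "F t = {y :: int \<Rightarrow> 'a. 0 < t \<and> forward_return k y t \<and> count_below (forward_return k y) t = J}"
    for t :: nat
  show ?thesis unfolding Suc
  proof (rule distr_random_shift)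
    show "F t \<in> sets seq_space" for t
    proof -
      have "(\<lambda>y :: int \<Rightarrow> 'a. count_below (forward_return k y) t) \<in> seq_space \<rightarrow>\<^sub>M count_space UNIV"
        by (rule measurable_count_below) (rule measurable_forward_return)
      from measurable_sets[OF this, of "{J}"]
      have "(\<lambda>y :: int \<Rightarrow> 'a. count_below (forward_return k y) t) -` {J} \<in> sets seq_space"
        by simp
      moreover have "{y :: int \<Rightarrow> 'a. forward_return k y t} \<in> sets seq_space"
        using measurable_forward_return[of k t] by (simp add: pred_def)
      moreover have "F t = (if 0 < t then {y. forward_return k y t}
          \<inter> (\<lambda>y. count_below (forward_return k y) t) -` {J} else {})"
        by (auto simp: F_def)
      ultimately show ?thesis by simp
    qed
    show "disjoint_family F"
      unfolding disjoint_family_on_def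
    proof (intro ballI impI)
      fix m m' :: nat assume "m \<noteq> m'"
      have False if "y \<in> F m" "y \<in> F m'" for y
        using that \<open>m \<noteq> m'\<close> count_below_inj[of m "forward_return k y" m'] unfolding F_def by auto
      then show "F m \<inter> F m' = {}" by blast
    qed
    show "AE y in P. y \<in> (\<Union>t. F t)"
      using AE_infinitely_many_returns[where k = k and p = 0 and d = 1]
    proof eventually_elim
      case (elim y)
      then have "\<forall>N. \<exists>t>N. forward_return k y t" by (simp add: forward_return_def)
      from count_below_attains[OF this, of J] show ?case by (auto simp: F_def)
    qed
    show "AE x in P. tau (\<lambda>i x. x i) k c (Suc J) x = t \<longleftrightarrow> (\<lambda>i. x (i + (c - int t))) \<in> F t" for t
      using AE_infinitely_many_returns[where k = k and p = c and d = "-1"]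
    proof eventually_elim
      case (elim x)
      then have "\<forall>N. \<exists>t>N. reoccurs (\<lambda>i x. x i) k c t x" by (simp add: reoccurs_def)
      note tau_eq = tau_Suc_eq_iff[OF this]
      show ?case
        unfolding tau_eq F_def mem_Collect_eq
        by (rule backward_count_eq_forward_count) simp
    qed
  qed (rule measurable_tau_coordinates)
qed

end

lemma measurable_path:
  assumes "\<And>i. X i \<in> M \<rightarrow>\<^sub>M count_space UNIV"
  shows "(\<lambda>\<omega> i. X i \<omega>) \<in> M \<rightarrow>\<^sub>M seq_space"
  unfolding seq_space_def by (rule measurable_PiM_single') (use assms in auto)

lemma stationary_law_distr:
  assumes "prob_space M" "\<And>i. X i \<in> M \<rightarrow>\<^sub>M count_space UNIV" "stationary M X"
  shows "stationary_law (distr M seq_space (\<lambda>\<omega> i. X i \<omega> :: 'a::countable))"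
proof (intro stationary_law.intro stationary_law_axioms.intro)
  show "prob_space (distr M seq_space (\<lambda>\<omega> i. X i \<omega>))"
    by (rule prob_space.prob_space_distr[OF assms(1) measurable_path[OF assms(2)]])
  fix m :: int
  have "distr (distr M seq_space (\<lambda>\<omega> i. X i \<omega>)) seq_space (\<lambda>x i. x (i + m))
      = distr M seq_space (\<lambda>\<omega> i. X (i + m) \<omega>)"
    by (subst distr_distr[OF measurable_shift_seq_space measurable_path[OF assms(2)]]) (simp add: comp_def)
  then show "distr (distr M seq_space (\<lambda>\<omega> i. X i \<omega>)) seq_space (\<lambda>x i. x (i + m))
      = distr M seq_space (\<lambda>\<omega> i. X i \<omega>)"
    using assms(3) unfolding stationary_def by simp
qed simp

theorem lemma1:
  fixes M :: "'b measure" and X :: "int \<Rightarrow> 'b \<Rightarrow> 'a::finite"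
    and k n j :: nat
  assumes "prob_space M"
    and "\<And>i. X i \<in> measurable M (count_space UNIV)"
    and "stationary M X"
    and "k \<ge> 1"
  shows "distr M seq_space (\<lambda>\<omega> i. X (int n - int (tau X k (int n) j \<omega>) + i) \<omega>)
           = distr M seq_space (\<lambda>\<omega> i. X i \<omega>)"
proof -
  let ?path = "\<lambda>\<omega> i. X i \<omega>"
    and ?shift = "\<lambda>x i. x (int n - int (tau (\<lambda>i x. x i) k (int n) j x) + i)"
  interpret stationary_law "distr M seq_space ?path"
    using stationary_law_distr assms(1-3) .
  have "distr M seq_space (\<lambda>\<omega> i. X (int n - int (tau X k (int n) j \<omega>) + i) \<omega>)
      = distr M seq_space (?shift \<circ> ?path)"
    by (simp add: comp_def tau_coordinates[of X k "int n" j])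
  also have "\<dots> = distr (distr M seq_space ?path) seq_space ?shift"
    by (rule distr_distr[symmetric, OF measurable_random_shift measurable_path])
      (use assms(2) in simp_all)
  also have "\<dots> = distr M seq_space ?path"
    by (rule distr_shift_by_tau)
  finally show ?thesis .
qed

end
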